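(* The average-case quantum query complexity of the Search problem under the uniform distribution on $\{0,\dots,m-1\}^n$ satisfies $Q_{\mathcal U}(\mathrm{Search})\ge\sqrt{m/15}-\sqrt{1/5}$.
   Context: Let $m\ge2$, $\Sigma=\{0,\dots,m-1\}$. The Search problem: given $x\in\Sigma^n$, output an index $i\in\{1,\dots,n\}$ with $x_i=1$. Query model: the algorithm space has orthonormal basis $|i,b\rangle$, $i\in\{1,\dots,n\}$, $b\in\Sigma$; the oracle is $O_x|i,b\rangle=|i,b+x_i\bmod m\rangle$ (equivalently the phase oracle $|i,b\rangle\mapsto e^{2\pi\mathbf i bx_i/m}|i,b\rangle$). A memoryless $T$-query algorithm is a sequence of unitaries $U_0,\dots,U_T$ on this space with final state $U_TO_x\cdots U_1O_xU_0|\mathrm{init}\rangle$ for a fixed basis state $|\mathrm{init}\rangle$; its output is the index obtained by measuring the index register of the final state. $Q_{\mathcal U}(\mathrm{Search})$ is the smallest $T$ such that some $T$-query algorithm, on input $x$ drawn uniformly from $\Sigma^n$, outputs an $i$ with $x_i=1$ with probability at least $2/3$ (probability over both $x$ and the measurement). *)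

theory Defs
  imports Complex_Main "HOL-Library.FuncSet"
begin

(* Basis states |i,b> are pairs (i,b) with i < n (index register, 0-based:
  i stands for index i+1) and b < m (symbol register). *)

type_synonym qstate = "nat \<times> nat \<Rightarrow> complex"
type_synonym qop = "nat \<times> nat \<Rightarrow> nat \<times> nat \<Rightarrow> complex"
  (* matrix: entry U p q = <p|U|q> *)

definition basis :: "nat \<Rightarrow> nat \<Rightarrow> (nat \<times> nat) set" where
  "basis n m = {0..<n} \<times> {0..<m}"

definition ket :: "nat \<times> nat \<Rightarrow> qstate" where
  "ket p = (\<lambda>q. if q = p then 1 else 0)"

definition apply_op :: "nat \<Rightarrow> nat \<Rightarrow> qop \<Rightarrow> qstate \<Rightarrow> qstate" where
  "apply_op n m U \<psi> = (\<lambda>p. \<Sum>q\<in>basis n m. U p q * \<psi> q)"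

(* Unitarity of a matrix on the space spanned by the basis
  (orthonormal columns; in finite dimension equivalent to unitarity). *)
definition unitary_on :: "nat \<Rightarrow> nat \<Rightarrow> qop \<Rightarrow> bool" where
  "unitary_on n m U \<longleftrightarrow>
     (\<forall>p\<in>basis n m. \<forall>q\<in>basis n m.
        (\<Sum>k\<in>basis n m. cnj (U k p) * U k q) = (if p = q then 1 else 0))"

definition orc :: "nat \<Rightarrow> (nat \<Rightarrow> nat) \<Rightarrow> qop" where
  "orc m x = (\<lambda>(i', b') (i, b). if i' = i \<and> b' = (b + x i) mod m then 1 else 0)"

(* Final state U_T O_x ... U_1 O_x U_0 |init> of the algorithm (U0, Us),
  Us = [U_1, ..., U_T]. *)
definition final_state :: "nat \<Rightarrow> nat \<Rightarrow> (nat \<Rightarrow> nat) \<Rightarrow> qop \<Rightarrow> qop list \<Rightarrow> nat \<times> nat \<Rightarrow> qstate" where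
  "final_state n m x U0 Us init =
     foldl (\<lambda>\<psi> U. apply_op n m U (apply_op n m (orc m x) \<psi>))
           (apply_op n m U0 (ket init)) Us"

definition success_prob :: "nat \<Rightarrow> nat \<Rightarrow> (nat \<Rightarrow> nat) \<Rightarrow> qstate \<Rightarrow> real" where
  "success_prob n m x \<psi> = (\<Sum>(i, b)\<in>{(i, b) \<in> basis n m. x i = 1}. (cmod (\<psi> (i, b)))\<^sup>2)"

definition avg_success :: "nat \<Rightarrow> nat \<Rightarrow> qop \<Rightarrow> qop list \<Rightarrow> nat \<times> nat \<Rightarrow> real" where
  "avg_success n m U0 Us init =
     (\<Sum>x\<in>PiE {0..<n} (\<lambda>_. {0..<m}). success_prob n m x (final_state n m x U0 Us init))
       / real m ^ n"

definition query_alg :: "nat \<Rightarrow> nat \<Rightarrow> nat \<Rightarrow> qop \<Rightarrow> qop list \<Rightarrow> nat \<times> nat \<Rightarrow> bool" where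
  "query_alg n m T U0 Us init \<longleftrightarrow>
     length Us = T \<and> init \<in> basis n m \<and> unitary_on n m U0 \<and> (\<forall>U\<in>set Us. unitary_on n m U)"

end

theory Submission
  imports Defs "HOL-Analysis.L2_Norm"
begin

(* Hybrid argument. Let w_s(i) be the norm of row i (index register equal to i) of the state
  after s queries on input x. If y differs from x only at index i, the s-th query increases the
  distance between the runs on x and y by at most 2 w_s(i); hence row i of the final state for
  x(i := 1) has norm at most w_T(i) + 2 * sum_{s<T} w_s(i). Each w_s is a unit vector in l2
  over i, so the triangle inequality gives sum_i |row i of final(x(i := 1))|^2 <= (2T + 1)^2.
  For uniform x, conditioning on x_i = 1 is the same as overwriting x_i by 1, at the cost of a
  factor 1/m; hence the average success probability is at most (2T + 1)^2 / m, and
  2/3 <= (2T + 1)^2 / m even gives T >= sqrt (m / 6) - 1/2. *)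

definition qnorm :: "nat \<Rightarrow> nat \<Rightarrow> qstate \<Rightarrow> real" where
  "qnorm n m \<psi> = L2_set (\<lambda>p. cmod (\<psi> p)) (basis n m)"

definition row_norm :: "nat \<Rightarrow> qstate \<Rightarrow> nat \<Rightarrow> real" where
  "row_norm m \<psi> i = L2_set (\<lambda>b. cmod (\<psi> (i, b))) {0..<m}"

lemma finite_basis [simp]: "finite (basis n m)"
  by (simp add: basis_def)

lemma row_norm_nonneg [simp]: "0 \<le> row_norm m \<psi> i"
  by (simp add: row_norm_def)

lemma qnorm_add_le: "qnorm n m (\<lambda>p. a p + b p) \<le> qnorm n m a + qnorm n m b"
  unfolding qnorm_def
  by (rule order_trans[OF L2_set_mono L2_set_triangle_ineq]) (auto intro: norm_triangle_ineq)

lemma qnorm_diff_le: "qnorm n m (\<lambda>p. a p - b p) \<le> qnorm n m a + qnorm n m b"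
  unfolding qnorm_def
  by (rule order_trans[OF L2_set_mono L2_set_triangle_ineq]) (auto intro: norm_triangle_ineq4)

lemma row_norm_add_le: "row_norm m (\<lambda>p. a p + b p) i \<le> row_norm m a i + row_norm m b i"
  unfolding row_norm_def
  by (rule order_trans[OF L2_set_mono L2_set_triangle_ineq]) (auto intro: norm_triangle_ineq)

lemma qnorm_eq_L2_set_row_norm: "qnorm n m \<psi> = L2_set (row_norm m \<psi>) {..<n}"
proof -
  have "(\<Sum>p\<in>basis n m. (cmod (\<psi> p))\<^sup>2) = (\<Sum>i<n. (row_norm m \<psi> i)\<^sup>2)"
    unfolding basis_def row_norm_def L2_set_def
    by (simp add: sum_nonneg sum.cartesian_product atLeast0LessThan)
  then show ?thesis
    unfolding qnorm_def L2_set_def by simp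
qed

lemma row_norm_le_qnorm: "i < n \<Longrightarrow> row_norm m \<psi> i \<le> qnorm n m \<psi>"
  unfolding qnorm_eq_L2_set_row_norm by (rule member_le_L2_set) auto

lemma qnorm_restrict_row:
  assumes "i < n"
  shows "qnorm n m (\<lambda>p. if fst p = i then \<psi> p else 0) = row_norm m \<psi> i"
proof -
  have rows: "row_norm m (\<lambda>p. if fst p = i then \<psi> p else 0) j = (if j = i then row_norm m \<psi> i else 0)"
    for j
    unfolding row_norm_def by (auto simp: L2_set_def)
  show ?thesis
    unfolding qnorm_eq_L2_set_row_norm rows using assms
    by (simp add: L2_set_def if_distrib[of "\<lambda>x. x\<^sup>2"] cong: if_cong)
qed

lemma qnorm_ket: "p \<in> basis n m \<Longrightarrow> qnorm n m (ket p) = 1"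
  by (simp add: qnorm_def L2_set_def ket_def if_distrib[of "\<lambda>x. (cmod x)\<^sup>2"] cong: if_cong)

lemma apply_op_diff:
  "apply_op n m U (\<lambda>q. a q - b q) p = apply_op n m U a p - apply_op n m U b p"
  by (simp add: apply_op_def algebra_simps sum_subtractf)

lemma qnorm_apply_op_unitary:
  assumes "unitary_on n m U"
  shows "qnorm n m (apply_op n m U \<psi>) = qnorm n m \<psi>"
proof -
  let ?B = "basis n m"
  let ?A = "apply_op n m U \<psi>"
  have norm_sq: "complex_of_real (\<Sum>p\<in>?B. (cmod (\<phi> p))\<^sup>2) = (\<Sum>p\<in>?B. cnj (\<phi> p) * \<phi> p)" for \<phi>
    unfolding of_real_sum by (intro sum.cong refl, subst complex_norm_square, rule mult.commute)
  have "(\<Sum>p\<in>?B. cnj (?A p) * ?A p)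
      = (\<Sum>p\<in>?B. \<Sum>q\<in>?B. \<Sum>r\<in>?B. cnj (\<psi> q) * \<psi> r * (cnj (U p q) * U p r))"
    by (simp add: apply_op_def sum_product algebra_simps) (rule sum.cong[OF refl], rule sum.swap)
  also have "\<dots> = (\<Sum>q\<in>?B. \<Sum>r\<in>?B. \<Sum>p\<in>?B. cnj (\<psi> q) * \<psi> r * (cnj (U p q) * U p r))"
    by (subst sum.swap) (rule sum.cong[OF refl], rule sum.swap)
  also have "\<dots> = (\<Sum>q\<in>?B. \<Sum>r\<in>?B. cnj (\<psi> q) * \<psi> r * (if q = r then 1 else 0))"
    using assms unfolding unitary_on_def by (simp add: sum_distrib_left[symmetric])
  also have "\<dots> = (\<Sum>q\<in>?B. cnj (\<psi> q) * \<psi> q)"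
    by (simp add: if_distrib cong: if_cong)
  finally have "(\<Sum>p\<in>?B. (cmod (?A p))\<^sup>2) = (\<Sum>p\<in>?B. (cmod (\<psi> p))\<^sup>2)"
    unfolding norm_sq[symmetric] of_real_eq_iff .
  then show ?thesis
    unfolding qnorm_def L2_set_def by simp
qed

lemma unitary_on_orc: "unitary_on n m (orc m x)"
  unfolding unitary_on_def
proof (intro ballI)
  fix p q assume p: "p \<in> basis n m" and q: "q \<in> basis n m"
  define \<sigma> where "\<sigma> = (\<lambda>(i, b). (i, (b + x i) mod m))"
  have orc_eq: "orc m x k r = (if k = \<sigma> r then 1 else 0)" for k r
    unfolding orc_def \<sigma>_def by (auto split: prod.splits)
  obtain i b j c where p_eq: "p = (i, b)" and q_eq: "q = (j, c)" and "b < m" "c < m"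
    using p q by (auto simp: basis_def)
  have "\<sigma> p \<in> basis n m"
    using p unfolding \<sigma>_def basis_def by auto
  moreover have "\<sigma> p = \<sigma> q \<longleftrightarrow> p = q"
  proof
    assume "\<sigma> p = \<sigma> q"
    then have "i = j" and "(b + x i) mod m = (c + x i) mod m"
      by (auto simp: \<sigma>_def p_eq q_eq)
    then have "b mod m = c mod m"
      by (simp add: nat_mod_eq_iff)
    with \<open>b < m\<close> \<open>c < m\<close> \<open>i = j\<close> show "p = q"
      by (simp add: p_eq q_eq)
  qed simp
  ultimately show "(\<Sum>k\<in>basis n m. cnj (orc m x k p) * orc m x k q) = (if p = q then 1 else 0)"
    unfolding orc_eq by (simp add: if_distrib[of "\<lambda>z. cnj z * _"] cong: if_cong)
qed

fun state_after :: "nat \<Rightarrow> nat \<Rightarrow> (nat \<Rightarrow> nat) \<Rightarrow> qop \<Rightarrow> qop list \<Rightarrow> nat \<times> nat \<Rightarrow> nat \<Rightarrow> qstate"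
  where
    "state_after n m x U0 Us init 0 = apply_op n m U0 (ket init)"
  | "state_after n m x U0 Us init (Suc t) =
       apply_op n m (Us ! t) (apply_op n m (orc m x) (state_after n m x U0 Us init t))"

lemma final_state_eq_state_after:
  "final_state n m x U0 Us init = state_after n m x U0 Us init (length Us)"
proof -
  have "foldl (\<lambda>\<psi> U. apply_op n m U (apply_op n m (orc m x) \<psi>)) (apply_op n m U0 (ket init)) (take t Us)
      = state_after n m x U0 Us init t" if "t \<le> length Us" for t
    using that by (induction t) (auto simp: take_Suc_conv_app_nth)
  then show ?thesis
    unfolding final_state_def by (metis order_refl take_all)
qed

lemma qnorm_state_after:
  assumes "query_alg n m T U0 Us init" and "t \<le> length Us"
  shows "qnorm n m (state_after n m x U0 Us init t) = 1"
  using assms(2)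
proof (induction t)
  case 0
  then show ?case
    using assms(1) by (simp add: query_alg_def qnorm_apply_op_unitary qnorm_ket)
next
  case (Suc t)
  then have "unitary_on n m (Us ! t)"
    using assms(1) by (simp add: query_alg_def)
  with Suc show ?case
    by (simp add: qnorm_apply_op_unitary unitary_on_orc)
qed

lemma apply_op_orc_diff_restrict_row:
  assumes "\<And>j. j \<noteq> i \<Longrightarrow> y j = x j"
  shows "apply_op n m (orc m y) \<psi> q - apply_op n m (orc m x) \<psi> q
       = apply_op n m (orc m y) (\<lambda>p. if fst p = i then \<psi> p else 0) q
         - apply_op n m (orc m x) (\<lambda>p. if fst p = i then \<psi> p else 0) q"
proof -
  have "orc m y q r = orc m x q r" if "fst r \<noteq> i" for r
    using assms[OF that] by (auto simp: orc_def split: prod.splits)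
  then show ?thesis
    unfolding apply_op_def sum_subtractf[symmetric] by (intro sum.cong) auto
qed

(* O_y a - O_x b = O_y (a - b) + (O_y - O_x) c, where c is row i of b. *)
lemma qnorm_orc_diff_le:
  assumes "\<And>j. j \<noteq> i \<Longrightarrow> y j = x j" and "i < n"
  shows "qnorm n m (\<lambda>q. apply_op n m (orc m y) a q - apply_op n m (orc m x) b q)
       \<le> qnorm n m (\<lambda>p. a p - b p) + 2 * row_norm m b i"
proof -
  let ?Oy = "apply_op n m (orc m y)" and ?Ox = "apply_op n m (orc m x)"
  let ?c = "\<lambda>p. if fst p = i then b p else 0"
  have split: "?Oy a q - ?Ox b q = ?Oy (\<lambda>p. a p - b p) q + (?Oy ?c q - ?Ox ?c q)" for q
  proof -
    have "?Oy b q - ?Ox b q = ?Oy ?c q - ?Ox ?c q"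
      by (rule apply_op_orc_diff_restrict_row) (rule assms(1))
    then show ?thesis
      by (simp add: apply_op_diff algebra_simps)
  qed
  have "qnorm n m (\<lambda>q. ?Oy a q - ?Ox b q)
      \<le> qnorm n m (?Oy (\<lambda>p. a p - b p)) + (qnorm n m (?Oy ?c) + qnorm n m (?Ox ?c))"
    unfolding split by (rule order_trans[OF qnorm_add_le add_left_mono[OF qnorm_diff_le]])
  also have "\<dots> = qnorm n m (\<lambda>p. a p - b p) + 2 * row_norm m b i"
    using assms(2) by (simp add: qnorm_apply_op_unitary unitary_on_orc qnorm_restrict_row)
  finally show ?thesis .
qed

lemma qnorm_state_after_diff_le:
  assumes "\<forall>U\<in>set Us. unitary_on n m U" and "\<And>j. j \<noteq> i \<Longrightarrow> y j = x j" and "i < n"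
    and "t \<le> length Us"
  shows "qnorm n m (\<lambda>p. state_after n m y U0 Us init t p - state_after n m x U0 Us init t p)
       \<le> 2 * (\<Sum>s<t. row_norm m (state_after n m x U0 Us init s) i)"
  using assms(4)
proof (induction t)
  case 0
  then show ?case
    by (simp add: qnorm_def L2_set_def)
next
  case (Suc t)
  let ?a = "state_after n m y U0 Us init t" and ?b = "state_after n m x U0 Us init t"
  have "unitary_on n m (Us ! t)"
    using assms(1) Suc.prems by simp
  then have "qnorm n m (\<lambda>p. state_after n m y U0 Us init (Suc t) p - state_after n m x U0 Us init (Suc t) p)
      = qnorm n m (\<lambda>q. apply_op n m (orc m y) ?a q - apply_op n m (orc m x) ?b q)"
    by (simp add: apply_op_diff[symmetric] qnorm_apply_op_unitary)
  also have "\<dots> \<le> qnorm n m (\<lambda>p. ?a p - ?b p) + 2 * row_norm m ?b i"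
    by (rule qnorm_orc_diff_le[OF assms(2,3)])
  finally show ?case
    using Suc by simp
qed

lemma L2_set_sum_le: "L2_set (\<lambda>i. \<Sum>s\<in>K. f s i) A \<le> (\<Sum>s\<in>K. L2_set (f s) A)"
proof (induction K rule: infinite_finite_induct)
  case (insert s K)
  then show ?case
    using L2_set_triangle_ineq[of "f s" "\<lambda>i. \<Sum>s\<in>K. f s i" A] by simp
qed (simp_all add: L2_set_def)

lemma row_norm_final_state_fun_upd_le:
  assumes "query_alg n m T U0 Us init" and "i < n"
  shows "row_norm m (final_state n m (x(i := v)) U0 Us init) i
       \<le> row_norm m (final_state n m x U0 Us init) i
         + (\<Sum>s<T. 2 * row_norm m (state_after n m x U0 Us init s) i)"
proof -
  let ?\<psi> = "final_state n m x U0 Us init" and ?\<phi> = "final_state n m (x(i := v)) U0 Us init"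
  have T: "T = length Us" and unitary: "\<forall>U\<in>set Us. unitary_on n m U"
    using assms(1) by (simp_all add: query_alg_def)
  have "row_norm m ?\<phi> i \<le> row_norm m ?\<psi> i + row_norm m (\<lambda>p. ?\<phi> p - ?\<psi> p) i"
    using row_norm_add_le[of m ?\<psi> "\<lambda>p. ?\<phi> p - ?\<psi> p" i] by simp
  also have "row_norm m (\<lambda>p. ?\<phi> p - ?\<psi> p) i \<le> qnorm n m (\<lambda>p. ?\<phi> p - ?\<psi> p)"
    by (rule row_norm_le_qnorm[OF assms(2)])
  also have "\<dots> \<le> 2 * (\<Sum>s<T. row_norm m (state_after n m x U0 Us init s) i)"
    unfolding final_state_eq_state_after T
    by (rule qnorm_state_after_diff_le[OF unitary _ assms(2)]) auto
  finally show ?thesis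
    by (simp add: sum_distrib_left)
qed

lemma sum_row_norm_final_state_fun_upd_le:
  assumes "query_alg n m T U0 Us init"
  shows "(\<Sum>i<n. (row_norm m (final_state n m (x(i := v)) U0 Us init) i)\<^sup>2) \<le> (2 * real T + 1)\<^sup>2"
proof -
  have T: "T = length Us"
    using assms by (simp add: query_alg_def)
  define g where "g i = row_norm m (final_state n m x U0 Us init) i
      + (\<Sum>s<T. 2 * row_norm m (state_after n m x U0 Us init s) i)" for i
  have "(\<Sum>i<n. (row_norm m (final_state n m (x(i := v)) U0 Us init) i)\<^sup>2) \<le> (\<Sum>i<n. (g i)\<^sup>2)"
    unfolding g_def by (intro sum_mono power_mono row_norm_final_state_fun_upd_le[OF assms]) auto
  also have "\<dots> = (L2_set g {..<n})\<^sup>2"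
    by (simp add: L2_set_def sum_nonneg g_def)
  also have "\<dots> \<le> (2 * real T + 1)\<^sup>2"
  proof (rule power_mono)
    have "L2_set g {..<n} \<le> L2_set (row_norm m (final_state n m x U0 Us init)) {..<n}
        + (\<Sum>s<T. L2_set (\<lambda>i. 2 * row_norm m (state_after n m x U0 Us init s) i) {..<n})"
      unfolding g_def by (rule order_trans[OF L2_set_triangle_ineq add_left_mono[OF L2_set_sum_le]])
    also have "\<dots> = 1 + (\<Sum>s<T. 2)"
      using qnorm_state_after[OF assms] T
      by (simp flip: L2_set_right_distrib add: qnorm_eq_L2_set_row_norm final_state_eq_state_after)
    finally show "L2_set g {..<n} \<le> 2 * real T + 1"
      by simp
  qed simp
  finally show ?thesis .
qed

lemma success_prob_eq_sum_row_norm: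
  "success_prob n m x \<psi> = (\<Sum>i<n. if x i = 1 then (row_norm m \<psi> i)\<^sup>2 else 0)"
proof -
  have targets: "{(i, b) \<in> basis n m. x i = 1} = {i\<in>{..<n}. x i = 1} \<times> {0..<m}"
    by (auto simp: basis_def)
  have "success_prob n m x \<psi> = (\<Sum>i\<in>{i\<in>{..<n}. x i = 1}. (row_norm m \<psi> i)\<^sup>2)"
    unfolding success_prob_def targets
    by (simp add: sum.cartesian_product row_norm_def L2_set_def sum_nonneg)
  also have "\<dots> = (\<Sum>i<n. if x i = 1 then (row_norm m \<psi> i)\<^sup>2 else 0)"
    by (rule sum.inter_filter) simp
  finally show ?thesis .
qed

lemma sum_PiE_fun_upd:
  fixes f :: "('a \<Rightarrow> 'b) \<Rightarrow> 'c::semiring_1"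
  assumes "i \<in> A" and "finite A" and "finite S" and "v \<in> S"
  shows "(\<Sum>x\<in>PiE A (\<lambda>_. S). f (x(i := v))) = of_nat (card S) * (\<Sum>x\<in>{x\<in>PiE A (\<lambda>_. S). x i = v}. f x)"
proof -
  let ?X = "PiE A (\<lambda>_. S)"
  have "(\<Sum>x\<in>?X. f (x(i := v))) = (\<Sum>w\<in>S. \<Sum>x\<in>{x\<in>?X. x i = w}. f (x(i := v)))"
    by (rule sum.group[symmetric]) (use assms in \<open>auto simp: PiE_iff finite_PiE\<close>)
  also have "\<dots> = (\<Sum>w\<in>S. \<Sum>x\<in>{x\<in>?X. x i = v}. f x)"
  proof (rule sum.cong[OF refl])
    fix w assume "w \<in> S"
    then show "(\<Sum>x\<in>{x\<in>?X. x i = w}. f (x(i := v))) = (\<Sum>x\<in>{x\<in>?X. x i = v}. f x)"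
      using assms(1,4)
      by (intro sum.reindex_bij_witness[where i = "\<lambda>x. x(i := w)" and j = "\<lambda>x. x(i := v)"])
        (auto simp: PiE_iff extensional_def)
  qed
  finally show ?thesis
    by simp
qed

lemma avg_success_le:
  assumes "query_alg n m T U0 Us init" and "1 < m"
  shows "avg_success n m U0 Us init \<le> (2 * real T + 1)\<^sup>2 / real m"
proof -
  let ?X = "PiE {0..<n} (\<lambda>_. {0..<m})"
  let ?p = "\<lambda>x i. (row_norm m (final_state n m x U0 Us init) i)\<^sup>2"
  have "(\<Sum>x\<in>?X. success_prob n m x (final_state n m x U0 Us init))
      = (\<Sum>x\<in>?X. \<Sum>i<n. if x i = 1 then ?p x i else 0)"
    by (simp add: success_prob_eq_sum_row_norm)
  also have "\<dots> = (\<Sum>i<n. \<Sum>x\<in>?X. if x i = 1 then ?p x i else 0)"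
    by (rule sum.swap)
  also have "\<dots> = (\<Sum>i<n. \<Sum>x\<in>{x\<in>?X. x i = 1}. ?p x i)"
    by (simp add: sum.inter_filter finite_PiE)
  also have "\<dots> = (\<Sum>i<n. (\<Sum>x\<in>?X. ?p (x(i := 1)) i) / real m)"
  proof (rule sum.cong[OF refl])
    fix i assume "i \<in> {..<n}"
    then show "(\<Sum>x\<in>{x\<in>?X. x i = 1}. ?p x i) = (\<Sum>x\<in>?X. ?p (x(i := 1)) i) / real m"
      using sum_PiE_fun_upd[of i "{0..<n}" "{0..<m}" 1 "\<lambda>x. ?p x i"] assms(2) by simp
  qed
  also have "\<dots> = (\<Sum>i<n. \<Sum>x\<in>?X. ?p (x(i := 1)) i) / real m"
    by (rule sum_divide_distrib[symmetric])
  also have "\<dots> = (\<Sum>x\<in>?X. \<Sum>i<n. ?p (x(i := 1)) i) / real m"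
    by (simp only: sum.swap[of _ "{..<n}"])
  also have "\<dots> \<le> (\<Sum>x\<in>?X. (2 * real T + 1)\<^sup>2) / real m"
    by (intro divide_right_mono sum_mono sum_row_norm_final_state_fun_upd_le[OF assms(1)]) simp
  also have "\<dots> = real m ^ n * ((2 * real T + 1)\<^sup>2 / real m)"
    by (simp add: card_PiE)
  finally show ?thesis
    using assms(2) unfolding avg_success_def by (simp add: divide_le_eq mult.commute)
qed

lemma sqrt_div_15_le_of_square_bound:
  fixes T m :: real
  assumes "0 \<le> T" and "0 < m" and "2 / 3 \<le> (2 * T + 1)\<^sup>2 / m"
  shows "sqrt (m / 15) - sqrt (1 / 5) \<le> T"
proof -
  define s where "s = sqrt (1 / 5 :: real)"
  have "1 / 5 \<le> s"
    unfolding s_def by (rule real_le_rsqrt) (simp add: power2_eq_square)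
  then have "T * (1 / 5) \<le> T * s"
    using assms(1) by (rule mult_left_mono)
  moreover have "s\<^sup>2 = 1 / 5"
    by (simp add: s_def)
  moreover have "2 * m \<le> 3 * (2 * T + 1)\<^sup>2"
    using assms(2,3) by (simp add: field_simps)
  moreover have "(T + s)\<^sup>2 = T\<^sup>2 + 2 * (T * s) + s\<^sup>2" and "(2 * T + 1)\<^sup>2 = 4 * T\<^sup>2 + 4 * T + 1"
    by (simp_all add: power2_eq_square algebra_simps)
  ultimately have "m / 15 \<le> (T + s)\<^sup>2"
    using zero_le_power2[of T] by linarith
  then have "sqrt (m / 15) \<le> T + s"
    using \<open>1 / 5 \<le> s\<close> assms(1) by (simp add: real_le_lsqrt)
  then show ?thesis
    by (simp add: s_def)
qed

theorem proposition4p9: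
  fixes n m T :: nat and U0 :: qop and Us :: "qop list" and init :: "nat \<times> nat"
  assumes "m \<ge> 2"
    and "query_alg n m T U0 Us init"
    and "avg_success n m U0 Us init \<ge> 2 / 3"
  shows "real T \<ge> sqrt (real m / 15) - sqrt (1 / 5)"
proof (rule sqrt_div_15_le_of_square_bound)
  show "2 / 3 \<le> (2 * real T + 1)\<^sup>2 / real m"
    using order_trans[OF assms(3) avg_success_le[OF assms(2)]] assms(1) by simp
qed (use assms(1) in auto)

end
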